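(* There exist absolute constants $c>0$ and $\delta_0>0$ such that the following holds: if $\delta\in(0,\delta_0]$, $r\in\mathbb{N}$, and $q$ is a univariate sum-of-squares polynomial of degree $r$ with $\|(1-x^2)-q\|_{1,\mathrm{cheb}}\le\delta$, then $r\ge c/\sqrt\delta$. That is, $r=\Omega(1/\sqrt\delta)$.
   Context: $T_k(x)=\cos(k\arccos x)$ is the Chebyshev polynomial of the first kind; for a univariate polynomial $p=\sum_kc_kT_k$, $\|p\|_{1,\mathrm{cheb}}=\sum_k|c_k|$. *)

theory Defs
  imports "HOL-Computational_Algebra.Polynomial"
begin

text \<open>Chebyshev polynomials of the first kind, T_0 = 1, T_1 = x,
  T_(n+2) = 2 x T_(n+1) - T_n (so that T_k(cos t) = cos(k t)).\<close>
fun cheb_T :: "nat \<Rightarrow> real poly" where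
  "cheb_T 0 = 1"
| "cheb_T (Suc 0) = [:0, 1:]"
| "cheb_T (Suc (Suc n)) = [:0, 2:] * cheb_T (Suc n) - cheb_T n"

definition cheb_coeffs :: "real poly \<Rightarrow> nat \<Rightarrow> real" where
  "cheb_coeffs p = (THE c. (\<forall>k > degree p. c k = 0) \<and>
      p = (\<Sum>k\<le>degree p. smult (c k) (cheb_T k)))"

definition cheb_norm1 :: "real poly \<Rightarrow> real" where
  "cheb_norm1 p = (\<Sum>k\<le>degree p. \<bar>cheb_coeffs p k\<bar>)"

definition is_sos_poly :: "real poly \<Rightarrow> bool" where
  "is_sos_poly q \<longleftrightarrow> (\<exists>fs :: real poly list. q = sum_list (map (\<lambda>f. f * f) fs))"

end

theory Submission
  imports Defs
begin

text \<open>
  The bound comes from evaluating slightly outside \<open>[-1, 1]\<close>.  Writing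
  \<open>x = (a + 1/a)/2\<close> with \<open>a \<ge> 1\<close>, we have \<open>T\<^sub>k(x) = (a\<^sup>k + a\<^sup>-\<^sup>k)/2\<close>, so
  \<open>\<bar>p(x)\<bar> \<le> a\<^sup>n \<parallel>p\<parallel>\<^sub>1\<^sub>,\<^sub>c\<^sub>h\<^sub>e\<^sub>b\<close> whenever \<open>deg p \<le> n\<close>.  For \<open>p = (1 - x\<^sup>2) - q\<close> with
  \<open>q \<ge> 0\<close> this gives \<open>x\<^sup>2 - 1 \<le> -p(x) \<le> a\<^sup>n \<delta>\<close>.  The choice \<open>a = 1 + 1/n\<close> keeps
  \<open>a\<^sup>n \<le> e\<close> while \<open>x\<^sup>2 - 1 = ((a - 1/a)/2)\<^sup>2 \<ge> 1/(n+1)\<^sup>2\<close>, so \<open>(n+1)\<^sup>2 \<ge> 1/(e\<delta>)\<close>.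
\<close>

lemma degree_coeff_cheb_T:
  "degree (cheb_T k) = k \<and> coeff (cheb_T k) k = (if k = 0 then 1 else 2 ^ (k - 1))"
proof (induction k rule: cheb_T.induct)
  case (3 n)
  have "cheb_T (Suc n) \<noteq> 0"
    using "3.IH"(1) by (metis degree_0 nat.distinct(1))
  then have "degree ([:0, 2:] * cheb_T (Suc n)) = Suc (Suc n)"
    using "3.IH"(1) by (simp add: degree_mult_eq)
  moreover have "degree (cheb_T n) < Suc (Suc n)"
    using "3.IH"(2) by simp
  ultimately have "degree (cheb_T (Suc (Suc n))) = Suc (Suc n)"
    using degree_add_eq_left[of "- cheb_T n" "[:0, 2:] * cheb_T (Suc n)"] by simp
  moreover have "coeff (cheb_T n) (Suc (Suc n)) = 0"
    using "3.IH"(2) by (simp add: coeff_eq_0)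
  ultimately show ?case
    using "3.IH"(1) by simp
qed simp_all

lemma degree_cheb_T [simp]: "degree (cheb_T k) = k"
  using degree_coeff_cheb_T by blast

lemma lead_coeff_cheb_T_nonzero: "lead_coeff (cheb_T k) \<noteq> 0"
  using degree_coeff_cheb_T[of k] by simp

lemma degree_cheb_T_sum_le: "degree (\<Sum>k\<le>n. smult (c k) (cheb_T k)) \<le> n"
  by (rule degree_sum_le) (auto intro: order.trans[OF degree_smult_le])

lemma cheb_T_linear_independent:
  assumes "(\<Sum>k\<le>n. smult (c k) (cheb_T k)) = 0" and "k \<le> n"
  shows "c k = 0"
  using assms
proof (induction n arbitrary: k)
  case (Suc n)
  let ?S = "\<Sum>k\<le>n. smult (c k) (cheb_T k)"
  have sum: "?S + smult (c (Suc n)) (cheb_T (Suc n)) = 0"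
    using Suc.prems(1) by simp
  have "coeff ?S (Suc n) = 0"
    using degree_cheb_T_sum_le[of c n] by (simp add: coeff_eq_0)
  then have "c (Suc n) * lead_coeff (cheb_T (Suc n)) = 0"
    using arg_cong[OF sum, of "\<lambda>p. coeff p (Suc n)"] by simp
  then have top: "c (Suc n) = 0"
    using lead_coeff_cheb_T_nonzero by simp
  show ?case
  proof (cases "k = Suc n")
    case False
    then show ?thesis
      using Suc.IH[of k] Suc.prems sum top by simp
  qed (use top in simp)
qed simp

lemma cheb_T_expansion_exists:
  assumes "degree p \<le> n"
  shows "\<exists>c. (\<forall>k > degree p. c k = 0) \<and> p = (\<Sum>k\<le>n. smult (c k) (cheb_T k))"
  using assms
proof (induction n arbitrary: p)
  case 0
  then show ?case
    by (intro exI[of _ "\<lambda>k. if k = 0 then coeff p 0 else 0"]) (auto elim: degree_eq_zeroE)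
next
  case (Suc n)
  show ?case
  proof (cases "degree p \<le> n")
    case True
    then obtain c where c: "\<forall>k > degree p. c k = 0" "p = (\<Sum>k\<le>n. smult (c k) (cheb_T k))"
      using Suc.IH by blast
    then show ?thesis
      using True by (intro exI[of _ c]) simp
  next
    case False
    then have deg_p: "degree p = Suc n"
      using Suc.prems by simp
    define \<alpha> where "\<alpha> = lead_coeff p / lead_coeff (cheb_T (Suc n))"
    define p' where "p' = p - smult \<alpha> (cheb_T (Suc n))"
    have "coeff p' (Suc n) = 0"
      using lead_coeff_cheb_T_nonzero[of "Suc n"] deg_p by (simp add: p'_def \<alpha>_def)
    moreover have "degree p' \<le> Suc n"
      unfolding p'_def using deg_p
      by (intro degree_diff_le) (auto intro: order.trans[OF degree_smult_le])
    moreover have "degree p' \<noteq> Suc n"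
      using \<open>coeff p' (Suc n) = 0\<close> by (metis degree_0 leading_coeff_0_iff nat.distinct(1))
    ultimately have deg_p': "degree p' \<le> n"
      by linarith
    then obtain c where c: "\<forall>k > degree p'. c k = 0" "p' = (\<Sum>k\<le>n. smult (c k) (cheb_T k))"
      using Suc.IH by blast
    have "p = (\<Sum>k\<le>Suc n. smult ((c(Suc n := \<alpha>)) k) (cheb_T k))"
      using c(2) by (simp add: sum.atMost_Suc p'_def)
    then show ?thesis
      using c(1) deg_p deg_p' by (intro exI[of _ "c(Suc n := \<alpha>)"]) auto
  qed
qed

lemma cheb_coeffs_expansion:
  "p = (\<Sum>k\<le>degree p. smult (cheb_coeffs p k) (cheb_T k))"
proof -
  let ?P = "\<lambda>c. (\<forall>k > degree p. c k = 0) \<and> p = (\<Sum>k\<le>degree p. smult (c k) (cheb_T k))"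
  have "\<exists>!c. ?P c"
  proof (rule ex_ex1I)
    show "\<exists>c. ?P c"
      using cheb_T_expansion_exists by blast
  next
    fix c d
    assume c: "?P c" and d: "?P d"
    have "(\<Sum>k\<le>degree p. smult (c k - d k) (cheb_T k)) = 0"
      using c d by (simp add: smult_diff_left sum_subtractf)
    then have "c k = d k" if "k \<le> degree p" for k
      using cheb_T_linear_independent that by fastforce
    then show "c = d"
      using c d by (metis ext not_le)
  qed
  then have "?P (cheb_coeffs p)"
    unfolding cheb_coeffs_def by (rule theI')
  then show ?thesis
    by blast
qed

lemma poly_cheb_T_Joukowski:
  fixes a b :: real
  assumes "a * b = 1"
  shows "poly (cheb_T k) ((a + b) / 2) = (a ^ k + b ^ k) / 2"
proof (induction k rule: cheb_T.induct)
  case (3 n)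
  have "(a + b) * (a ^ Suc n + b ^ Suc n)
      = a ^ Suc (Suc n) + b ^ Suc (Suc n) + (a * b) * (a ^ n + b ^ n)"
    by (simp add: algebra_simps power_Suc)
  then show ?case
    using assms by (simp add: "3.IH" field_simps)
qed simp_all

lemma abs_poly_cheb_T_Joukowski_le:
  fixes a :: real
  assumes "a \<ge> 1"
  shows "\<bar>poly (cheb_T k) ((a + inverse a) / 2)\<bar> \<le> a ^ k"
proof -
  have "0 < inverse a" "inverse a \<le> a"
    using assms by (auto simp: inverse_le_1_iff intro: order.trans[of _ 1])
  then have "0 < inverse a ^ k" "inverse a ^ k \<le> a ^ k"
    by (simp_all add: power_mono)
  moreover have "poly (cheb_T k) ((a + inverse a) / 2) = (a ^ k + inverse a ^ k) / 2"
    using assms by (intro poly_cheb_T_Joukowski) simp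
  ultimately show ?thesis
    by simp
qed

lemma abs_poly_Joukowski_le_cheb_norm1:
  fixes a :: real
  assumes "a \<ge> 1" and "degree p \<le> n"
  shows "\<bar>poly p ((a + inverse a) / 2)\<bar> \<le> a ^ n * cheb_norm1 p"
proof -
  let ?x = "(a + inverse a) / 2"
  have "poly p ?x = (\<Sum>k\<le>degree p. cheb_coeffs p k * poly (cheb_T k) ?x)"
    by (subst cheb_coeffs_expansion) (simp add: poly_sum)
  also have "\<bar>\<dots>\<bar> \<le> (\<Sum>k\<le>degree p. \<bar>cheb_coeffs p k\<bar> * \<bar>poly (cheb_T k) ?x\<bar>)"
    by (rule order.trans[OF sum_abs]) (simp add: abs_mult)
  also have "\<dots> \<le> (\<Sum>k\<le>degree p. \<bar>cheb_coeffs p k\<bar> * a ^ n)"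
  proof (intro sum_mono mult_left_mono)
    fix k
    assume "k \<in> {..degree p}"
    then have "a ^ k \<le> a ^ n"
      using assms by (intro power_increasing) auto
    then show "\<bar>poly (cheb_T k) ?x\<bar> \<le> a ^ n"
      using abs_poly_cheb_T_Joukowski_le[OF assms(1)] order.trans by blast
  qed simp
  also have "\<dots> = a ^ n * cheb_norm1 p"
    by (simp add: cheb_norm1_def sum_distrib_left mult.commute)
  finally show ?thesis .
qed

lemma cheb_norm1_nonneg: "0 \<le> cheb_norm1 p"
  by (simp add: cheb_norm1_def sum_nonneg)

lemma is_sos_poly_nonneg:
  assumes "is_sos_poly q"
  shows "0 \<le> poly q x"
proof -
  have "0 \<le> poly (\<Sum>f\<leftarrow>fs. f * f) x" for fs :: "real poly list"
    by (induction fs) auto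
  then show ?thesis
    using assms unfolding is_sos_poly_def by blast
qed

lemma cheb_norm1_one_minus_square_minus_nonneg_lower_bound:
  assumes nonneg: "\<And>x. 0 \<le> poly q x"
    and deg: "degree ([:1, 0, -1:] - q) \<le> n" and "n > 0"
  shows "1 \<le> exp 1 * (real n + 1)\<^sup>2 * cheb_norm1 ([:1, 0, -1:] - q)"
proof -
  define a where "a = 1 + 1 / real n"
  define x where "x = (a + inverse a) / 2"
  have "a \<ge> 1"
    by (simp add: a_def)
  have "2 / (real n + 1) = 2 * real n / (real n * (real n + 1))"
    using \<open>n > 0\<close> by simp
  also have "\<dots> \<le> (2 * real n + 1) / (real n * (real n + 1))"
    by (intro divide_right_mono) simp_all
  also have "\<dots> = a - inverse a"
    using \<open>n > 0\<close> unfolding a_def by (simp add: field_simps)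
  finally have "(1 / (real n + 1))\<^sup>2 \<le> ((a - inverse a) / 2)\<^sup>2"
    by (intro power_mono) simp_all
  also have "\<dots> = x\<^sup>2 - 1"
    using \<open>a \<ge> 1\<close> by (simp add: x_def power2_eq_square field_simps)
  also have "\<dots> \<le> - poly ([:1, 0, -1:] - q) x"
    using nonneg[of x] by (simp add: power2_eq_square)
  also have "\<dots> \<le> a ^ n * cheb_norm1 ([:1, 0, -1:] - q)"
    using abs_poly_Joukowski_le_cheb_norm1[OF \<open>a \<ge> 1\<close> deg] by (simp add: x_def)
  also have "\<dots> \<le> exp 1 * cheb_norm1 ([:1, 0, -1:] - q)"
    using exp_ge_one_plus_x_over_n_power_n[of n 1] \<open>n > 0\<close>
    by (intro mult_right_mono) (simp_all add: a_def cheb_norm1_nonneg)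
  finally show ?thesis
    by (simp add: field_simps)
qed

lemma quarter_div_sqrt_le_of_exp_bound:
  fixes m \<delta> :: real
  assumes bound: "1 \<le> exp 1 * (m + 3)\<^sup>2 * \<delta>"
    and "0 \<le> m" "0 < \<delta>" "\<delta> \<le> 1/144"
  shows "1/4 / sqrt \<delta> \<le> m"
proof -
  have "1 \<le> 4 * (m + 3)\<^sup>2 * \<delta>"
    using bound exp_le \<open>0 < \<delta>\<close>
    by (elim order.trans) (intro mult_right_mono; simp)
  also have "\<dots> = (2 * (m + 3) * sqrt \<delta>)\<^sup>2"
    unfolding power_mult_distrib using \<open>0 < \<delta>\<close> by simp
  finally have "1\<^sup>2 \<le> (2 * (m + 3) * sqrt \<delta>)\<^sup>2"
    by simp
  then have "1 \<le> 2 * (m + 3) * sqrt \<delta>"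
    by (rule power2_le_imp_le) (simp add: \<open>0 \<le> m\<close> \<open>0 < \<delta>\<close> less_imp_le)
  moreover have "12 * sqrt \<delta> \<le> 1"
    using real_sqrt_le_mono[OF \<open>\<delta> \<le> 1/144\<close>] by (simp add: real_sqrt_divide)
  ultimately have "1 \<le> 4 * m * sqrt \<delta>"
    unfolding distrib_left distrib_right by linarith
  then show ?thesis
    using \<open>0 < \<delta>\<close> by (simp add: field_simps)
qed

theorem theorem10:
  shows "\<exists>c::real > 0. \<exists>\<delta>0::real > 0. \<forall>(\<delta>::real) (r::nat) (q::real poly).
     0 < \<delta> \<and> \<delta> \<le> \<delta>0 \<and> is_sos_poly q \<and> degree q = r \<and>
     cheb_norm1 ([:1, 0, -1:] - q) \<le> \<delta> \<longrightarrow> real r \<ge> c / sqrt \<delta>"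
proof (rule exI[of _ "1/4"], intro conjI exI[of _ "1/144"] allI impI)
  fix \<delta> :: real and r :: nat and q :: "real poly"
  assume "0 < \<delta> \<and> \<delta> \<le> 1/144 \<and> is_sos_poly q \<and> degree q = r \<and>
    cheb_norm1 ([:1, 0, -1:] - q) \<le> \<delta>"
  then have \<delta>: "0 < \<delta>" "\<delta> \<le> 1/144" and "is_sos_poly q" "degree q = r"
    and approx: "cheb_norm1 ([:1, 0, -1:] - q) \<le> \<delta>"
    by auto
  have "degree ([:1, 0, -1:] - q) \<le> r + 2"
    using \<open>degree q = r\<close> by (intro degree_diff_le) (auto simp: degree_pCons_eq_if)
  then have "1 \<le> exp 1 * (real r + 3)\<^sup>2 * cheb_norm1 ([:1, 0, -1:] - q)"
    using cheb_norm1_one_minus_square_minus_nonneg_lower_bound[of q "r + 2"]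
      is_sos_poly_nonneg[OF \<open>is_sos_poly q\<close>]
    by (simp add: add.commute)
  also have "\<dots> \<le> exp 1 * (real r + 3)\<^sup>2 * \<delta>"
    using approx by (intro mult_left_mono) simp_all
  finally show "1/4 / sqrt \<delta> \<le> real r"
    by (rule quarter_div_sqrt_le_of_exp_bound) (use \<delta> in simp_all)
qed simp_all

end
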